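(* For integers $n,m$ and $y=(y_1,y_2,y_3)\in Q$, \[\Phi_{n,m;y}(u,v;1,1;z,w;q)=\Delta_y(z,w;q)\,\frac{\Phi_{n,m;y}(u,v;z,w;q)-zwq^{m+y_1-1}\Phi_{n,m;y}(uq^{-y_{12}}/z,\,vq^{-y_{23}}/w;z,w;q)}{1-zwq^{-1}}.\]
   Context: $Q=\{y\in\mathbb{Z}^3:y_1+y_2+y_3=0\}$, $y_{ij}:=y_i-y_j$. For $n\in\mathbb{Z}$, $(a;q)_n=(a;q)_\infty/(aq^n;q)_\infty$ ($1/(q;q)_n=0$ for $n<0$), $(a_1,\dots,a_k;q)_n=\prod_i(a_i;q)_n$. $\Phi_{n,m}(z,w;q):=\frac{(zwq;q)_{n+m}}{(q,zq,zwq;q)_n(q,wq,zwq;q)_m}$; $\Phi_{n,m}(u,v;z,w;q):=\Phi_{n,m}(z/q,w;q)-\frac{uz}{(z;q)_2}\Phi_{n-1,m}(zq,w/q;q)+\frac{uvzw^2}{(w,zw;q)_2}\Phi_{n-1,m-1}(z,wq;q)$; $\Phi_{n,m;y}(z,w;q):=\frac{(zwq;q)_{n+m}}{(q;q)_{n-y_1}(zq;q)_{n-y_2}(zwq;q)_{n-y_3}(q;q)_{m+y_3}(wq;q)_{m+y_2}(zwq;q)_{m+y_1}}$; $\Phi_{n,m;y}(u,v;z,w;q):=\frac{\Phi_{n-y_1,m-y_1-y_2}(u,v;zq^{y_{12}},wq^{y_{23}};q)}{(zq;q)_{y_{12}}(wq;q)_{y_{23}}(zwq;q)_{y_{13}}}$.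 With $\rho=(1,2,3)$, $\sigma\in S_3$ in one-line notation and $\chi$ the indicator, $\Phi_{n,m}(u,v;c,d;z,w;q):=\sum_{\sigma\in S_3}\operatorname{sgn}(\sigma)(uz)^{\sigma_1-1}(v/d)^{\chi(\sigma_3=1)}(c/u)^{\chi(\sigma_1=3)}(dw)^{3-\sigma_3}\Phi_{n,m;\sigma-\rho}(z/q,w/q;q)$, and \[\Phi_{n,m;y}(u,v;c,d;z,w;q):=\frac{\Phi_{n-y_1,m-y_1-y_2}(u,v;c,d;zq^{y_{12}},wq^{y_{23}};q)}{(z;q)_{y_{12}}(w;q)_{y_{23}}(zw/q;q)_{y_{13}}}.\] Finally $\Delta_y(z,w;q):=\frac{(1-zq^{y_{12}})(1-wq^{y_{23}})(1-zwq^{y_{13}})}{(1-z)(1-w)(1-zw)}$. *)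

theory Defs
  imports Complex_Main "HOL-Combinatorics.Permutations"
begin

text \<open>q-Pochhammer symbol (a;q)_n for integer n, via (a;q)_n = (a;q)_inf/(aq^n;q)_inf.  With Isabelle's convention
  x/0 = 0, this automatically gives 1/(q;q)_n = 0 for n < 0.\<close>
definition qpoch :: "complex \<Rightarrow> complex \<Rightarrow> int \<Rightarrow> complex" where
  "qpoch a q n =
     (if 0 \<le> n then (\<Prod>k<nat n. 1 - a * q ^ k)
      else 1 / (\<Prod>k\<in>{1..nat (- n)}. 1 - a / q ^ k))"

definition Phi0 :: "int \<Rightarrow> int \<Rightarrow> complex \<Rightarrow> complex \<Rightarrow> complex \<Rightarrow> complex" where
  "Phi0 n m z w q =
     qpoch (z*w*q) q (n+m) /
     (qpoch q q n * qpoch (z*q) q n * qpoch (z*w*q) q n *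
      qpoch q q m * qpoch (w*q) q m * qpoch (z*w*q) q m)"

definition PhiUV :: "complex \<Rightarrow> complex \<Rightarrow> int \<Rightarrow> int \<Rightarrow> complex \<Rightarrow> complex \<Rightarrow> complex \<Rightarrow> complex" where
  "PhiUV u v n m z w q =
     Phi0 n m (z/q) w q
     - u*z / qpoch z q 2 * Phi0 (n-1) m (z*q) (w/q) q
     + u*v*z*w^2 / (qpoch w q 2 * qpoch (z*w) q 2) * Phi0 (n-1) (m-1) z (w*q) q"

definition Phi0y :: "int \<Rightarrow> int \<Rightarrow> int \<Rightarrow> int \<Rightarrow> int \<Rightarrow> complex \<Rightarrow> complex \<Rightarrow> complex \<Rightarrow> complex" where
  "Phi0y n m y1 y2 y3 z w q =
     qpoch (z*w*q) q (n+m) /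
     (qpoch q q (n-y1) * qpoch (z*q) q (n-y2) * qpoch (z*w*q) q (n-y3) *
      qpoch q q (m+y3) * qpoch (w*q) q (m+y2) * qpoch (z*w*q) q (m+y1))"

definition PhiUVy :: "complex \<Rightarrow> complex \<Rightarrow> int \<Rightarrow> int \<Rightarrow> int \<Rightarrow> int \<Rightarrow> int \<Rightarrow>
    complex \<Rightarrow> complex \<Rightarrow> complex \<Rightarrow> complex" where
  "PhiUVy u v n m y1 y2 y3 z w q =
     PhiUV u v (n-y1) (m-y1-y2) (z * q powi (y1-y2)) (w * q powi (y2-y3)) q /
     (qpoch (z*q) q (y1-y2) * qpoch (w*q) q (y2-y3) * qpoch (z*w*q) q (y1-y3))"

definition PhiCD :: "complex \<Rightarrow> complex \<Rightarrow> complex \<Rightarrow> complex \<Rightarrow> int \<Rightarrow> int \<Rightarrow>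
    complex \<Rightarrow> complex \<Rightarrow> complex \<Rightarrow> complex" where
  "PhiCD u v c d n m z w q =
     (\<Sum>\<sigma> | \<sigma> permutes {1::nat,2,3}.
        of_int (sign \<sigma>) * (u*z) ^ (\<sigma> 1 - 1)
        * (v/d) ^ (if \<sigma> 3 = 1 then 1 else 0)
        * (c/u) ^ (if \<sigma> 1 = 3 then 1 else 0)
        * (d*w) ^ (3 - \<sigma> 3)
        * Phi0y n m (int (\<sigma> 1) - 1) (int (\<sigma> 2) - 2) (int (\<sigma> 3) - 3) (z/q) (w/q) q)"

definition PhiCDy :: "complex \<Rightarrow> complex \<Rightarrow> complex \<Rightarrow> complex \<Rightarrow> int \<Rightarrow> int \<Rightarrow>
    int \<Rightarrow> int \<Rightarrow> int \<Rightarrow> complex \<Rightarrow> complex \<Rightarrow> complex \<Rightarrow> complex" where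
  "PhiCDy u v c d n m y1 y2 y3 z w q =
     PhiCD u v c d (n-y1) (m-y1-y2) (z * q powi (y1-y2)) (w * q powi (y2-y3)) q /
     (qpoch z q (y1-y2) * qpoch w q (y2-y3) * qpoch (z*w/q) q (y1-y3))"

definition Delta :: "int \<Rightarrow> int \<Rightarrow> int \<Rightarrow> complex \<Rightarrow> complex \<Rightarrow> complex \<Rightarrow> complex" where
  "Delta y1 y2 y3 z w q =
     (1 - z * q powi (y1-y2)) * (1 - w * q powi (y2-y3)) * (1 - z*w * q powi (y1-y3)) /
     ((1 - z) * (1 - w) * (1 - z*w))"

end

theory Submission
  imports Defs
begin

(*
  For c = d = 1 the six S_3-terms of Phi_{N,M}(u,v;1,1;Z,W) fall into three pairs, one for each
  of the monomials 1, u, uv, and each pair obeys a contiguous relation: multiplied by 1 - ZW/q it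
  becomes the corresponding term of Phi_{N,M}(u,v;Z,W) - ZW q^(M-1) Phi_{N,M}(u/Z,v/W;Z,W).
  All nine Phi-values involved are one common product of q-Pochhammer symbols times a rational
  function of q^N and q^M, so each relation reduces to a rational identity.  The shifted
  statement is this identity at Z = z q^(y1-y2), W = w q^(y2-y3): trading the denominators
  (zq;q), (wq;q), (zwq;q) of Phi_y(u,v) for the denominators (z;q), (w;q), (zw/q;q) of
  Phi_y(u,v;c,d) produces exactly Delta_y and (1 - ZW/q)/(1 - zw/q).
*)

definition q_generic :: "complex \<Rightarrow> complex \<Rightarrow> bool" where
  "q_generic a q \<longleftrightarrow> (\<forall>k::int. a * q powi k \<noteq> 1)"

definition not_root_of_unity :: "complex \<Rightarrow> bool" where
  "not_root_of_unity q \<longleftrightarrow> (\<forall>k::int. k \<noteq> 0 \<longrightarrow> q powi k \<noteq> 1)"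

lemma q_generic_factor_nonzero: "q_generic a q \<Longrightarrow> 1 - a * q powi k \<noteq> 0"
  unfolding q_generic_def by (metis eq_iff_diff_eq_0)

lemma q_generic_nonzero:
  assumes "q_generic a q"
  shows "1 - a \<noteq> 0" and "1 - a * q \<noteq> 0" and "1 - a / q \<noteq> 0"
  using q_generic_factor_nonzero[OF assms, of 0] q_generic_factor_nonzero[OF assms, of 1]
    q_generic_factor_nonzero[OF assms, of "-1"]
  by (simp_all add: power_int_minus divide_inverse)

lemma q_generic_mult_powi: "q_generic a q \<Longrightarrow> q \<noteq> 0 \<Longrightarrow> q_generic (a * q powi i) q"
  unfolding q_generic_def by (metis mult.assoc power_int_add)

lemma qpoch_of_nat_Suc: "qpoch a q (int (Suc j)) = qpoch a q (int j) * (1 - a * q ^ j)"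
  unfolding qpoch_def by (simp del: of_nat_Suc)

lemma qpoch_uminus_of_nat: "qpoch a q (- int j) = 1 / (\<Prod>k\<in>{1..j}. 1 - a / q ^ k)"
  by (cases "j = 0") (simp_all add: qpoch_def)

lemma qpoch_add_1:
  assumes "q_generic a q" and "q \<noteq> 0"
  shows "qpoch a q (k + 1) = qpoch a q k * (1 - a * q powi k)"
proof (cases "k \<ge> 0")
  case True
  then obtain j where k: "k = int j" using nonneg_eq_int by blast
  show ?thesis using qpoch_of_nat_Suc[of a q j] unfolding k by (simp add: add.commute)
next
  case False
  define j where "j = nat (- k) - 1"
  have k: "k = - int (Suc j)" using False by (simp add: j_def)
  have ak: "a * q powi k = a / q ^ Suc j"
    unfolding k power_int_minus power_int_of_nat by (simp add: divide_inverse)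
  then have "1 - a / q ^ Suc j \<noteq> 0" using q_generic_factor_nonzero[OF assms(1), of k] by simp
  then have "qpoch a q (- int j) = qpoch a q (- int (Suc j)) * (1 - a / q ^ Suc j)"
    unfolding qpoch_uminus_of_nat by (simp add: prod.nat_ivl_Suc')
  then show ?thesis unfolding ak by (simp add: k)
qed

lemma qpoch_diff_1:
  assumes "q_generic a q" and "q \<noteq> 0"
  shows "qpoch a q (k - 1) = qpoch a q k / (1 - a * q powi (k - 1))"
  using qpoch_add_1[OF assms, of "k - 1"] q_generic_factor_nonzero[OF assms(1), of "k - 1"]
  by (simp add: eq_divide_eq)

lemma qpoch_nonzero:
  assumes "q_generic a q" and "q \<noteq> 0"
  shows "qpoch a q k \<noteq> 0"
proof (induction k rule: int_induct[where k = 0])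
  case base
  then show ?case by (simp add: qpoch_def)
next
  case (step1 i)
  then show ?case
    using qpoch_add_1[OF assms, of i] q_generic_factor_nonzero[OF assms(1), of i] by simp
next
  case (step2 i)
  then show ?case
    using qpoch_diff_1[OF assms, of i] q_generic_factor_nonzero[OF assms(1), of "i - 1"] by simp
qed

lemma qpoch_mult_q:
  assumes g: "q_generic a q" and q: "q \<noteq> 0"
  shows "qpoch (a * q) q k = qpoch a q (k + 1) / (1 - a)"
proof -
  have gq: "q_generic (a * q) q" using q_generic_mult_powi[OF g q, of 1] by simp
  have "qpoch (a * q) q k * (1 - a) = qpoch a q (k + 1)"
  proof (induction k rule: int_induct[where k = 0])
    case base
    then show ?case by (simp add: qpoch_def)
  next
    case (step1 i)
    have "qpoch (a * q) q (i + 1) * (1 - a) = qpoch a q (i + 1) * (1 - a * q powi (i + 1))"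
      unfolding qpoch_add_1[OF gq q, of i] step1(2)[symmetric] using q by (simp add: power_int_add mult_ac)
    then show ?case using qpoch_add_1[OF g q, of "i + 1"] by simp
  next
    case (step2 i)
    have "qpoch (a * q) q (i - 1) * (1 - a) = qpoch a q (i + 1) / (1 - a * q powi i)"
      unfolding qpoch_diff_1[OF gq q, of i] step2(2)[symmetric] using q
      by (simp add: power_int_diff mult_ac)
    then show ?case using qpoch_diff_1[OF g q, of "i + 1"] by simp
  qed
  then show ?thesis using q_generic_nonzero(1)[OF g] by (simp add: eq_divide_eq)
qed

lemma qpoch_div_q:
  assumes g: "q_generic a q" and q: "q \<noteq> 0"
  shows "qpoch (a / q) q k = (1 - a / q) * qpoch a q (k - 1)"
proof -
  have g': "q_generic (a / q) q" using q_generic_mult_powi[OF g q, of "-1"] by (simp add: divide_inverse)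
  have "qpoch a q (k - 1) = qpoch (a / q) q k / (1 - a / q)"
    using qpoch_mult_q[OF g' q, of "k - 1"] q by simp
  then show ?thesis using q_generic_nonzero(1)[OF g'] by simp
qed

lemma qpoch_q_eq_0:
  assumes "q \<noteq> 0" and "k < 0"
  shows "qpoch q q k = 0"
proof -
  define j where "j = nat (- k)"
  have k: "k = - int j" and "j \<ge> 1" using \<open>k < 0\<close> by (simp_all add: j_def)
  then have "(\<Prod>i\<in>{1..j}. 1 - q / q ^ i) = 0"
    using assms(1) by (intro prod_zero) (auto intro!: bexI[of _ 1])
  then show ?thesis unfolding k qpoch_uminus_of_nat by simp
qed

(* Valid for all k: for k \<le> 0 both sides vanish, at k = 0 through the factor 1 - q^0. *)
lemma inverse_qpoch_q_diff_1:
  assumes q: "q \<noteq> 0" and nr: "not_root_of_unity q"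
  shows "inverse (qpoch q q (k - 1)) = inverse (qpoch q q k) * (1 - q powi k)"
proof (cases "k \<ge> 1")
  case True
  then obtain j where j: "k - 1 = int j" by (metis diff_ge_0_iff_ge nonneg_eq_int)
  then have k: "k = int (Suc j)" by simp
  have "1 - q ^ Suc j \<noteq> 0"
    using nr unfolding not_root_of_unity_def by (metis k power_int_of_nat of_nat_eq_0_iff nat.distinct(1) right_minus_eq)
  then show ?thesis
    unfolding j using qpoch_of_nat_Suc[of q q j] unfolding k by (simp del: of_nat_Suc)
next
  case False
  then show ?thesis using qpoch_q_eq_0[OF q] by (cases "k = 0") auto
qed

lemma qpoch_1_add:
  assumes "q_generic a q" "q \<noteq> 0"
  shows "qpoch a q (1 + k) = qpoch a q k * (1 - a * q powi k)"
  using qpoch_add_1[OF assms, of k] by (simp only: add.commute)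

lemma inverse_qpoch_q_diff_2:
  assumes "q \<noteq> 0" "not_root_of_unity q"
  shows "inverse (qpoch q q (k - 2)) = inverse (qpoch q q k) * (1 - q powi k) * (1 - q powi (k - 1))"
  using inverse_qpoch_q_diff_1[OF assms, of k] inverse_qpoch_q_diff_1[OF assms, of "k - 1"]
  by (simp add: mult_ac)

lemma Phi0_eq_inverse_form:
  "Phi0 n m z w q =
    qpoch (z*w*q) q (n+m) * inverse (qpoch q q n) * inverse (qpoch q q m)
    / (qpoch (z*q) q n * qpoch (z*w*q) q n * qpoch (w*q) q m * qpoch (z*w*q) q m)"
  unfolding Phi0_def by (simp only: divide_inverse inverse_mult_distrib mult_ac)

lemma Phi0y_at_div_q:
  assumes "q \<noteq> 0"
  shows "Phi0y N M y1 y2 y3 (Z/q) (W/q) q =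
    qpoch (Z*W/q) q (N+M) * inverse (qpoch q q (N-y1)) * inverse (qpoch q q (M+y3))
    / (qpoch Z q (N-y2) * qpoch (Z*W/q) q (N-y3) * qpoch W q (M+y2) * qpoch (Z*W/q) q (M+y1))"
proof -
  have "Z/q*(W/q)*q = Z*W/q" "Z/q*q = Z" "W/q*q = W" using assms by simp_all
  then show ?thesis unfolding Phi0y_def by (simp only: divide_inverse inverse_mult_distrib mult_ac)
qed

lemma q_generic_nonzero_factors:
  fixes N M :: int
  assumes q: "q \<noteq> 0" and gZ: "q_generic Z q" and gW: "q_generic W q" and gZW: "q_generic (Z*W) q"
    and X_def: "X = q powi N" and Y_def: "Y = q powi M"
  shows "1 - Z*W/q \<noteq> 0" "1 - Z*W*X*Y/q \<noteq> 0" "1 - Z*W*X/q \<noteq> 0" "1 - Z*W*Y/q \<noteq> 0"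
    "1 - Z*X/q \<noteq> 0" "1 - W*Y/q \<noteq> 0" "1 - Z*X \<noteq> 0" "1 - W*Y \<noteq> 0" "1 - Z*W*X \<noteq> 0"
    "1 - Z*W*Y \<noteq> 0" "1 - Z \<noteq> 0" "1 - Z*q \<noteq> 0" "1 - W \<noteq> 0" "1 - W*q \<noteq> 0" "1 - Z*W \<noteq> 0"
    "1 - Z*W*q \<noteq> 0"
proof -
  have pw: "q powi (N - 1) = X / q" "q powi (M - 1) = Y / q" "q powi (N + M - 1) = X * Y / q"
    "q powi (-1) = inverse q"
    using q by (simp_all add: X_def Y_def power_int_diff power_int_add power_int_minus)
  note nz = q_generic_factor_nonzero[OF gZ] q_generic_factor_nonzero[OF gW] q_generic_factor_nonzero[OF gZW]
  show "1 - Z*W/q \<noteq> 0" "1 - Z*W*X*Y/q \<noteq> 0" "1 - Z*W*X/q \<noteq> 0" "1 - Z*W*Y/q \<noteq> 0"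
    "1 - Z*X/q \<noteq> 0" "1 - W*Y/q \<noteq> 0" "1 - Z*X \<noteq> 0" "1 - W*Y \<noteq> 0" "1 - Z*W*X \<noteq> 0"
    "1 - Z*W*Y \<noteq> 0" "1 - Z \<noteq> 0" "1 - Z*q \<noteq> 0" "1 - W \<noteq> 0" "1 - W*q \<noteq> 0" "1 - Z*W \<noteq> 0"
    "1 - Z*W*q \<noteq> 0"
    using nz[of "-1"] nz[of "N+M-1"] nz[of "N-1"] nz[of "M-1"] nz[of N] nz[of M] nz[of 0] nz[of 1]
    unfolding pw X_def Y_def by (simp_all add: divide_inverse mult.assoc)
qed

lemma Phi0y_Phi0_common_factor:
  fixes N M :: int
  assumes q: "q \<noteq> 0" and nr: "not_root_of_unity q"
    and gZ: "q_generic Z q" and gW: "q_generic W q" and gZW: "q_generic (Z*W) q"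
    and X_def: "X = q powi N" and Y_def: "Y = q powi M"
    and K_def: "K = qpoch (Z*W) q (N+M) * inverse (qpoch q q N) * inverse (qpoch q q M)
             / (qpoch Z q N * qpoch W q M * qpoch (Z*W) q N * qpoch (Z*W) q M)"
  shows "Phi0y N M 0 0 0 (Z/q) (W/q) q
           = K * ((1-Z*W*X/q)*(1-Z*W*Y/q) / ((1-Z*W/q)*(1-Z*W*X*Y/q)))" (is ?T0)
    and "Phi0y N M 0 1 (-1) (Z/q) (W/q) q
           = K * ((1-Y)*(1-Z*X/q)*(1-Z*W*Y/q) / ((1-W*Y)*(1-Z*W/q)*(1-Z*W*X*Y/q)))" (is ?T1)
    and "Phi0y N M 1 (-1) 0 (Z/q) (W/q) q
           = K * ((1-X)*(1-Z*W*X/q)*(1-W*Y/q) / ((1-Z*X)*(1-Z*W/q)*(1-Z*W*X*Y/q)))" (is ?T2)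
    and "Phi0y N M 1 1 (-2) (Z/q) (W/q) q
           = K * ((1-X)*(1-Y)*(1-Y/q)*(1-Z*X/q) / ((1-Z*W*X)*(1-W*Y)*(1-Z*W/q)*(1-Z*W*X*Y/q)))"
           (is ?T3)
    and "Phi0y N M 2 (-1) (-1) (Z/q) (W/q) q
           = K * ((1-X)*(1-X/q)*(1-Y)*(1-W*Y/q) / ((1-Z*X)*(1-Z*W*Y)*(1-Z*W/q)*(1-Z*W*X*Y/q)))"
           (is ?T4)
    and "Phi0y N M 2 0 (-2) (Z/q) (W/q) q
           = K * ((1-X)*(1-X/q)*(1-Y)*(1-Y/q) / ((1-Z*W*X)*(1-Z*W*Y)*(1-Z*W/q)*(1-Z*W*X*Y/q)))"
           (is ?T5)
    and "Phi0 N M (Z/q) W q = K * ((1-W) / (1-W*Y))" (is ?U0)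
    and "Phi0 (N-1) M (Z*q) (W/q) q
           = K * ((1-X)*(1-Z)*(1-Z*q)*(1-Z*W) / ((1-Z*X)*(1-Z*W*Y)))" (is ?U1)
    and "Phi0 (N-1) (M-1) Z (W*q) q
           = K * ((1-X)*(1-Y)*(1-Z)*(1-W)*(1-W*q)*(1-Z*W)*(1-Z*W*q) / ((1-Z*W*X)*(1-W*Y)*(1-Z*W*Y)))"
           (is ?U2)
proof -
  have gZq: "q_generic (Z*q) q" and gWq: "q_generic (W*q) q" and gZWq: "q_generic (Z*W*q) q"
    using q_generic_mult_powi[OF _ q, of _ 1] gZ gW gZW by auto
  have args: "Z/q*W*q = Z*W" "Z/q*q = Z" "Z*q*(W/q)*q = Z*W*q" "Z*(W*q)*q = Z*W*q*q"
    using q by simp_all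
  have pw: "q powi (N - 1) = X / q" "q powi (M - 1) = Y / q" "q powi (N + M - 1) = X * Y / q"
    "q powi (N + M) = X * Y" "q powi N = X" "q powi M = Y" "q powi (-1) = inverse q" "q powi 0 = 1"
    "q powi 1 = q"
    using q by (simp_all add: X_def Y_def power_int_diff power_int_add power_int_minus)
  note nz = q_generic_nonzero_factors[OF q gZ gW gZW X_def Y_def]
  note qp = qpoch_nonzero[OF gZ q] qpoch_nonzero[OF gW q] qpoch_nonzero[OF gZW q]
  note shifts = qpoch_div_q[OF gZW q]
    qpoch_mult_q[OF gZ q] qpoch_mult_q[OF gW q] qpoch_mult_q[OF gZW q]
    qpoch_mult_q[OF gZq q] qpoch_mult_q[OF gWq q] qpoch_mult_q[OF gZWq q]
    qpoch_diff_1[OF gZ q] qpoch_diff_1[OF gW q] qpoch_diff_1[OF gZW q]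
    qpoch_add_1[OF gZ q] qpoch_add_1[OF gW q] qpoch_add_1[OF gZW q]
    qpoch_1_add[OF gZ q] qpoch_1_add[OF gW q] qpoch_1_add[OF gZW q]
    inverse_qpoch_q_diff_1[OF q nr] inverse_qpoch_q_diff_2[OF q nr]
  \<comment> \<open>the factors 1/(q;q)_N and 1/(q;q)_M may vanish, so they must not be cleared as denominators\<close>
  obtain RN RM where R: "inverse (qpoch q q N) = RN" "inverse (qpoch q q M) = RM" by blast
  show ?T0 ?T1 ?T2 ?T3 ?T4 ?T5 ?U0 ?U1 ?U2
    unfolding Phi0y_at_div_q[OF q] Phi0_eq_inverse_form args K_def
      apply (simp_all add: shifts pw)
     apply (simp_all only: R)
    using nz qp q by (simp_all add: field_simps)
qed

lemma Phi0y_contiguous_relations: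
  fixes N M :: int
  assumes q: "q \<noteq> 0" and nr: "not_root_of_unity q"
    and gZ: "q_generic Z q" and gW: "q_generic W q" and gZW: "q_generic (Z*W) q"
  shows "(Phi0y N M 0 0 0 (Z/q) (W/q) q - W * Phi0y N M 0 1 (-1) (Z/q) (W/q) q) * (1 - Z*W/q)
           = (1 - Z*W*q powi (M-1)) * Phi0 N M (Z/q) W q" (is ?R0)
    and "(Phi0y N M 1 (-1) 0 (Z/q) (W/q) q - Z*W * Phi0y N M 2 (-1) (-1) (Z/q) (W/q) q) * (1 - Z*W/q)
           = (1 - W*q powi (M-1)) * Phi0 (N-1) M (Z*q) (W/q) q / ((1-Z)*(1-Z*q))" (is ?R1)
    and "(Phi0y N M 1 1 (-2) (Z/q) (W/q) q - Z * Phi0y N M 2 0 (-2) (Z/q) (W/q) q) * (1 - Z*W/q)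
           = (1 - q powi (M-1)) * Phi0 (N-1) (M-1) Z (W*q) q / ((1-W)*(1-W*q)*(1-Z*W)*(1-Z*W*q))"
           (is ?R2)
proof -
  define X Y K where "X = q powi N" and "Y = q powi M"
    and "K = qpoch (Z*W) q (N+M) * inverse (qpoch q q N) * inverse (qpoch q q M)
             / (qpoch Z q N * qpoch W q M * qpoch (Z*W) q N * qpoch (Z*W) q M)"
  have pw: "q powi (M - 1) = Y / q" using q by (simp add: Y_def power_int_diff)
  note nf = Phi0y_Phi0_common_factor[OF q nr gZ gW gZW X_def Y_def K_def]
  note nz = q_generic_nonzero_factors[OF q gZ gW gZW X_def Y_def]
  show ?R0 ?R1 ?R2
    unfolding nf pw using nz q
    by (simp_all add: divide_simps) (simp_all add: algebra_simps)
qed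

lemma sum_permutes_1_2_3:
  fixes f :: "(nat \<Rightarrow> nat) \<Rightarrow> 'a::comm_monoid_add"
  shows "sum f {p. p permutes {1::nat,2,3}} =
     f (transpose 1 1 \<circ> (transpose 2 2 \<circ> (transpose 3 3 \<circ> id))) + f (transpose 1 1 \<circ> (transpose 2 3 \<circ> (transpose 3 3 \<circ> id)))
   + f (transpose 1 2 \<circ> (transpose 2 2 \<circ> (transpose 3 3 \<circ> id))) + f (transpose 1 2 \<circ> (transpose 2 3 \<circ> (transpose 3 3 \<circ> id)))
   + f (transpose 1 3 \<circ> (transpose 2 2 \<circ> (transpose 3 3 \<circ> id))) + f (transpose 1 3 \<circ> (transpose 2 3 \<circ> (transpose 3 3 \<circ> id)))"
  by (simp add: sum_over_permutations_insert add.assoc)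

lemma PhiCD_expand:
  "PhiCD u v c d n m z w q =
      Phi0y n m 0 0 0 (z/q) (w/q) q
    - (d*w) * Phi0y n m 0 1 (-1) (z/q) (w/q) q
    - (u*z) * Phi0y n m 1 (-1) 0 (z/q) (w/q) q
    + (u*z) * (v/d) * (d*w)^2 * Phi0y n m 1 1 (-2) (z/q) (w/q) q
    + (u*z)^2 * (c/u) * (d*w) * Phi0y n m 2 (-1) (-1) (z/q) (w/q) q
    - (u*z)^2 * (v/d) * (c/u) * (d*w)^2 * Phi0y n m 2 0 (-2) (z/q) (w/q) q"
  unfolding PhiCD_def sum_permutes_1_2_3
  by (simp add: sign_compose permutation_swap_id permutation_compose sign_swap_id transpose_def algebra_simps)

lemma qpoch_2: "qpoch a q 2 = (1 - a) * (1 - a * q)"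
  by (simp add: qpoch_def numeral_2_eq_2)

lemma PhiCD_1_1_eq_PhiUV_combination:
  assumes q: "q \<noteq> 0" and nr: "not_root_of_unity q"
    and gZ: "q_generic Z q" and gW: "q_generic W q" and gZW: "q_generic (Z*W) q"
    and Z: "Z \<noteq> 0" and W: "W \<noteq> 0"
  shows "PhiCD u v 1 1 N M Z W q * (1 - Z*W/q) =
         PhiUV u v N M Z W q - Z*W*q powi (M-1) * PhiUV (u/Z) (v/W) N M Z W q"
proof -
  define A0 A1 A2 where
    "A0 = Phi0y N M 0 0 0 (Z/q) (W/q) q - W * Phi0y N M 0 1 (-1) (Z/q) (W/q) q" and
    "A1 = Phi0y N M 1 (-1) 0 (Z/q) (W/q) q - Z*W * Phi0y N M 2 (-1) (-1) (Z/q) (W/q) q" and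
    "A2 = Phi0y N M 1 1 (-2) (Z/q) (W/q) q - Z * Phi0y N M 2 0 (-2) (Z/q) (W/q) q"
  note contiguous = Phi0y_contiguous_relations[OF q nr gZ gW gZW, of N M, folded A0_def A1_def A2_def]
  have PhiCD_split: "PhiCD u v 1 1 N M Z W q = A0 - u*Z*A1 + u*v*Z*W^2*A2"
    unfolding PhiCD_expand A0_def A1_def A2_def using Z by (simp add: power2_eq_square algebra_simps)
  have "PhiCD u v 1 1 N M Z W q * (1 - Z*W/q) =
      A0 * (1 - Z*W/q) - u*Z * (A1 * (1 - Z*W/q)) + u*v*Z*W^2 * (A2 * (1 - Z*W/q))"
    unfolding PhiCD_split by (simp add: algebra_simps)
  also have "\<dots> = (1 - Z*W*q powi (M-1)) * Phi0 N M (Z/q) W q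
      - u*Z * ((1 - W*q powi (M-1)) * Phi0 (N-1) M (Z*q) (W/q) q / ((1-Z)*(1-Z*q)))
      + u*v*Z*W^2 * ((1 - q powi (M-1)) * Phi0 (N-1) (M-1) Z (W*q) q / ((1-W)*(1-W*q)*(1-Z*W)*(1-Z*W*q)))"
    unfolding contiguous ..
  also have "\<dots> = PhiUV u v N M Z W q - Z*W*q powi (M-1) * PhiUV (u/Z) (v/W) N M Z W q"
    unfolding PhiUV_def qpoch_2
    using Z W q_generic_nonzero(1,2)[OF gZ] q_generic_nonzero(1,2)[OF gW] q_generic_nonzero(1,2)[OF gZW]
    by (simp add: divide_simps) (simp add: algebra_simps power2_eq_square)
  finally show ?thesis .
qed

lemma qpoch_mult_q_same_length:
  assumes "q_generic a q" and "q \<noteq> 0"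
  shows "qpoch (a * q) q k = qpoch a q k * (1 - a * q powi k) / (1 - a)"
  using qpoch_mult_q[OF assms, of k] qpoch_add_1[OF assms, of k] by simp

lemma qpoch_div_q_same_length:
  assumes "q_generic a q" and "q \<noteq> 0"
  shows "qpoch (a / q) q k = (1 - a / q) * qpoch a q k / (1 - a * q powi (k - 1))"
  using qpoch_div_q[OF assms, of k] qpoch_diff_1[OF assms, of k] by simp

lemma PhiUVy_eq_shifted_PhiUV:
  assumes q: "q \<noteq> 0" and gz: "q_generic z q" and gw: "q_generic w q" and gzw: "q_generic (z*w) q"
  shows "PhiUVy u v n m y1 y2 y3 z w q =
    PhiUV u v (n-y1) (m-y1-y2) (z * q powi (y1-y2)) (w * q powi (y2-y3)) q /
    (qpoch z q (y1-y2) * qpoch w q (y2-y3) * qpoch (z*w) q (y1-y3) * Delta y1 y2 y3 z w q)"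
  unfolding PhiUVy_def Delta_def
    qpoch_mult_q_same_length[OF gz q] qpoch_mult_q_same_length[OF gw q]
    qpoch_mult_q_same_length[OF gzw q]
  using q_generic_nonzero(1)[OF gz] q_generic_nonzero(1)[OF gw] q_generic_nonzero(1)[OF gzw]
  by (simp add: field_simps)

lemma Delta_nonzero:
  assumes "q_generic z q" and "q_generic w q" and "q_generic (z*w) q"
  shows "Delta y1 y2 y3 z w q \<noteq> 0"
  unfolding Delta_def
  using q_generic_factor_nonzero[OF assms(1), of "y1-y2"] q_generic_factor_nonzero[OF assms(2), of "y2-y3"]
    q_generic_factor_nonzero[OF assms(3), of "y1-y3"] q_generic_nonzero(1)[OF assms(1)]
    q_generic_nonzero(1)[OF assms(2)] q_generic_nonzero(1)[OF assms(3)]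
  by simp

lemma PhiCDy_eq_shifted_PhiCD:
  assumes q: "q \<noteq> 0" and gzw: "q_generic (z*w) q"
  shows "PhiCDy u v c d n m y1 y2 y3 z w q =
    PhiCD u v c d (n-y1) (m-y1-y2) (z * q powi (y1-y2)) (w * q powi (y2-y3)) q
      * (1 - z*w * q powi (y1-y3-1)) /
    (qpoch z q (y1-y2) * qpoch w q (y2-y3) * qpoch (z*w) q (y1-y3) * (1 - z*w/q))"
  unfolding PhiCDy_def qpoch_div_q_same_length[OF gzw q]
  by (simp add: mult_ac)

lemma PhiCDy_1_1_eq_PhiUV_combination:
  assumes q: "q \<noteq> 0" and nr: "not_root_of_unity q"
    and gz: "q_generic z q" and gw: "q_generic w q" and gzw: "q_generic (z*w) q"
    and "z \<noteq> 0" and "w \<noteq> 0"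
    and Z_def: "Z = z * q powi (y1-y2)" and W_def: "W = w * q powi (y2-y3)"
  shows "PhiCDy u v 1 1 n m y1 y2 y3 z w q
           * (qpoch z q (y1-y2) * qpoch w q (y2-y3) * qpoch (z*w) q (y1-y3) * (1 - z*w/q))
         = PhiUV u v (n-y1) (m-y1-y2) Z W q
           - Z*W*q powi (m-y1-y2-1) * PhiUV (u/Z) (v/W) (n-y1) (m-y1-y2) Z W q"
proof -
  have ZW: "Z * W = z * w * q powi (y1-y3)"
    unfolding Z_def W_def using q by (simp add: power_int_add[symmetric] mult_ac)
  have gZ: "q_generic Z q" and gW: "q_generic W q" and gZW: "q_generic (Z*W) q"
    unfolding ZW unfolding Z_def W_def using q_generic_mult_powi[OF _ q] gz gw gzw by blast+
  have "Z \<noteq> 0" "W \<noteq> 0" using \<open>z \<noteq> 0\<close> \<open>w \<noteq> 0\<close> q by (simp_all add: Z_def W_def)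
  note core = PhiCD_1_1_eq_PhiUV_combination[OF q nr gZ gW gZW this, of u v "n-y1" "m-y1-y2"]
  have "z * w * q powi (y1-y3-1) = Z*W/q" using q by (simp add: ZW power_int_diff)
  then show ?thesis
    unfolding PhiCDy_eq_shifted_PhiCD[OF q gzw] Z_def[symmetric] W_def[symmetric] core[symmetric]
    using qpoch_nonzero[OF gz q] qpoch_nonzero[OF gw q] qpoch_nonzero[OF gzw q] q_generic_nonzero(3)[OF gzw]
    by simp
qed

theorem corollary4p10:
  fixes n m y1 y2 y3 :: int and u v z w q :: complex
  assumes hy: "y1 + y2 + y3 = 0"
    and hq0: "q \<noteq> 0"
    and hq: "\<And>k::int. k \<noteq> 0 \<Longrightarrow> q powi k \<noteq> 1"
    and hz0: "z \<noteq> 0" and hw0: "w \<noteq> 0"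
    and hz: "\<And>k::int. z * q powi k \<noteq> 1"
    and hw: "\<And>k::int. w * q powi k \<noteq> 1"
    and hzw: "\<And>k::int. z * w * q powi k \<noteq> 1"
  shows "PhiCDy u v 1 1 n m y1 y2 y3 z w q =
           Delta y1 y2 y3 z w q *
           (PhiUVy u v n m y1 y2 y3 z w q
            - z * w * q powi (m + y1 - 1) *
              PhiUVy (u * q powi (-(y1-y2)) / z) (v * q powi (-(y2-y3)) / w) n m y1 y2 y3 z w q)
           / (1 - z * w / q)"
proof -
  have gz: "q_generic z q" and gw: "q_generic w q" and gzw: "q_generic (z*w) q"
    using hz hw hzw unfolding q_generic_def by blast+
  have nr: "not_root_of_unity q" using hq unfolding not_root_of_unity_def by blast
  define Z W where "Z = z * q powi (y1-y2)" and "W = w * q powi (y2-y3)"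
  define D where "D = qpoch z q (y1-y2) * qpoch w q (y2-y3) * qpoch (z*w) q (y1-y3)"
  have "m + y1 - 1 = (y1-y2) + (y2-y3) + (m-y1-y2-1)" using hy by simp
  then have "q powi (m + y1 - 1) = q powi (y1-y2) * q powi (y2-y3) * q powi (m-y1-y2-1)"
    using hq0 by (metis power_int_add)
  then have args: "z * w * q powi (m + y1 - 1) = Z*W * q powi (m-y1-y2-1)"
    "u * q powi (-(y1-y2)) / z = u/Z" "v * q powi (-(y2-y3)) / w = v/W"
    unfolding Z_def W_def power_int_minus by (simp_all add: divide_inverse mult_ac)
  have nz: "D \<noteq> 0" "Delta y1 y2 y3 z w q \<noteq> 0" "1 - z*w/q \<noteq> 0"
    using qpoch_nonzero[OF gz hq0] qpoch_nonzero[OF gw hq0] qpoch_nonzero[OF gzw hq0]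
      Delta_nonzero[OF gz gw gzw] q_generic_nonzero(3)[OF gzw]
    by (simp_all add: D_def)
  have "PhiCDy u v 1 1 n m y1 y2 y3 z w q
      = (PhiUV u v (n-y1) (m-y1-y2) Z W q
         - Z*W*q powi (m-y1-y2-1) * PhiUV (u/Z) (v/W) (n-y1) (m-y1-y2) Z W q) / (D * (1 - z*w/q))"
    using PhiCDy_1_1_eq_PhiUV_combination[OF hq0 nr gz gw gzw hz0 hw0 Z_def W_def, of u v n m] nz
    unfolding D_def by (simp add: eq_divide_eq)
  also have "\<dots> = Delta y1 y2 y3 z w q *
           (PhiUVy u v n m y1 y2 y3 z w q
            - z * w * q powi (m + y1 - 1) *
              PhiUVy (u * q powi (-(y1-y2)) / z) (v * q powi (-(y2-y3)) / w) n m y1 y2 y3 z w q)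
           / (1 - z * w / q)"
    unfolding PhiUVy_eq_shifted_PhiUV[OF hq0 gz gw gzw] args D_def[symmetric] Z_def[symmetric] W_def[symmetric]
    using nz hq0 by (simp add: field_simps)
  finally show ?thesis .
qed

end
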